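(* Let $H=(T_1,\dots,T_n,p_1,\dots,p_n)$ be a strategic game with a belief structure satisfying properties A and B. Then: (i) $\overline{GR}^{\alpha}=\overline{LR}^{\alpha}$ for all ordinals $\alpha$; in particular the outcomes of $\overline{GR}$ and $\overline{LR}$ coincide. (ii) The operator $\overline{LR}$ is order independent; indeed, the outcome of every relaxation of $\overline{LR}$ that has an outcome equals the outcome of $\overline{GR}$. (iii) $LR^{\alpha}=\overline{LR}^{\alpha}$ for all ordinals $\alpha$; in particular the outcome of $LR$ exists and equals the outcome of $\overline{LR}$.
   Context: A strategic game $H=(T_1,\dots,T_n,p_1,\dots,p_n)$ has nonempty strategy sets $T_i$ and real payoffs. A restriction is $G=(S_1,\dots,S_n)$ with $S_i\subseteq T_i$ (possibly empty), ordered by componentwise inclusion (a complete lattice with top $H$). A belief structure gives each player $i$ a nonempty belief set $\mathcal B_i$, an expected payoff $p_i:T_i\times\mathcal B_i\to\mathbb R$, and for each restriction $G$ a set $\mathcal B_i\,\dot\cap\,G\subseteq\mathcal B_i$, with $\mathcal B_i\,\dot\cap\,H=\mathcal B_i$. Property A: $G_1\subseteq G_2\subseteq H$ implies $\mathcal B_i\,\dot\cap\,G_1\subseteq\mathcal B_i\,\dot\cap\,G_2$ for all $i$. Best response: for $G=(S_1,\dots,S_n)$, $s_i\in T_i$ is in $BR_G(\mu_i)$ iff $p_i(s_i,\mu_i)\ge p_i(s_i',\mu_i)$ for all $s_i'\in S_i$. Property B: for every $i$ and every $\mu_i\in\mathcal B_i$, $BR_H(\mu_i)\neq\emptyset$.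 Operators: $GR(G):=(S_1',\dots,S_n')$ with $S_i':=\{s_i\in T_i\mid\exists\mu_i\in\mathcal B_i\,\dot\cap\,G:\ s_i\in BR_H(\mu_i)\}$; $LR(G):=(S_1',\dots,S_n')$ with $S_i':=\{s_i\in T_i\mid\exists\mu_i\in\mathcal B_i\,\dot\cap\,G:\ s_i\in BR_G(\mu_i)\}$; $\overline{T}(G):=T(G)\cap G$. Iterations: $T^0:=H$, $T^{\alpha+1}:=T(T^\alpha)$, $T^\beta:=\bigcap_{\alpha<\beta}T^\alpha$ for limit $\beta$; closure ordinal $\alpha_T$ = least $\alpha$ with $T^{\alpha+1}=T^\alpha$, outcome $T^{\alpha_T}$. $R$ is a relaxation of $T$ if for all ordinals $\alpha$: (1) $T(R^\alpha)\subseteq R(R^\alpha)$; (2) if $T(R^\alpha)\subseteq R^\alpha$ then $R(R^\alpha)\subseteq R^\alpha$; (3) if $R(R^\alpha)=R^\alpha$ then $T(R^\alpha)=R^\alpha$. $T$ is order independent if the set of outcomes of relaxations of $T$ has at most one element. *)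

theory Defs
  imports Complex_Main
begin

text \<open>Players are the elements of a finite type 'i; strategies of all players live in a
  common type 's; T i is the (nonempty) strategy set of player i.  A restriction is a
  family G with G i a subset of T i (possibly empty), ordered componentwise
  (the function order on 'i => 's set).\<close>

definition restriction :: "('i \<Rightarrow> 's set) \<Rightarrow> ('i \<Rightarrow> 's set) \<Rightarrow> bool" where
  "restriction T G \<longleftrightarrow> (\<forall>i. G i \<subseteq> T i)"

definition operator_on :: "('i \<Rightarrow> 's set) \<Rightarrow> (('i \<Rightarrow> 's set) \<Rightarrow> ('i \<Rightarrow> 's set)) \<Rightarrow> bool" where
  "operator_on T F \<longleftrightarrow> (\<forall>G. restriction T G \<longrightarrow> restriction T (F G))"

text \<open>B i is the belief set of player i, ep i s mu the expected payoff of strategy s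
  under belief mu, and bcap i G the set "B_i dot-cap G".\<close>

definition belief_structure ::
  "('i \<Rightarrow> 's set) \<Rightarrow> ('i \<Rightarrow> 'b set) \<Rightarrow> ('i \<Rightarrow> ('i \<Rightarrow> 's set) \<Rightarrow> 'b set) \<Rightarrow> bool" where
  "belief_structure T B bcap \<longleftrightarrow>
     (\<forall>i. B i \<noteq> {}) \<and>
     (\<forall>i G. restriction T G \<longrightarrow> bcap i G \<subseteq> B i) \<and>
     (\<forall>i. bcap i T = B i)"

definition propA :: "('i \<Rightarrow> 's set) \<Rightarrow> ('i \<Rightarrow> ('i \<Rightarrow> 's set) \<Rightarrow> 'b set) \<Rightarrow> bool" where
  "propA T bcap \<longleftrightarrow>
     (\<forall>G1 G2. restriction T G1 \<and> restriction T G2 \<and> G1 \<le> G2 \<longrightarrow>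
        (\<forall>i. bcap i G1 \<subseteq> bcap i G2))"

definition BR :: "('i \<Rightarrow> 's set) \<Rightarrow> ('i \<Rightarrow> 's \<Rightarrow> 'b \<Rightarrow> real) \<Rightarrow> 'i \<Rightarrow> ('i \<Rightarrow> 's set) \<Rightarrow> 'b \<Rightarrow> 's set" where
  "BR T ep i G mu = {s \<in> T i. \<forall>s' \<in> G i. ep i s mu \<ge> ep i s' mu}"

definition propB :: "('i \<Rightarrow> 's set) \<Rightarrow> ('i \<Rightarrow> 'b set) \<Rightarrow> ('i \<Rightarrow> 's \<Rightarrow> 'b \<Rightarrow> real) \<Rightarrow> bool" where
  "propB T B ep \<longleftrightarrow> (\<forall>i. \<forall>mu \<in> B i. BR T ep i T mu \<noteq> {})"

definition GR :: "('i \<Rightarrow> 's set) \<Rightarrow> ('i \<Rightarrow> 's \<Rightarrow> 'b \<Rightarrow> real) \<Rightarrow> ('i \<Rightarrow> ('i \<Rightarrow> 's set) \<Rightarrow> 'b set)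
     \<Rightarrow> ('i \<Rightarrow> 's set) \<Rightarrow> ('i \<Rightarrow> 's set)" where
  "GR T ep bcap G = (\<lambda>i. {s \<in> T i. \<exists>mu \<in> bcap i G. s \<in> BR T ep i T mu})"

definition LR :: "('i \<Rightarrow> 's set) \<Rightarrow> ('i \<Rightarrow> 's \<Rightarrow> 'b \<Rightarrow> real) \<Rightarrow> ('i \<Rightarrow> ('i \<Rightarrow> 's set) \<Rightarrow> 'b set)
     \<Rightarrow> ('i \<Rightarrow> 's set) \<Rightarrow> ('i \<Rightarrow> 's set)" where
  "LR T ep bcap G = (\<lambda>i. {s \<in> T i. \<exists>mu \<in> bcap i G. s \<in> BR T ep i G mu})"

definition bar :: "('a \<Rightarrow> 'a) \<Rightarrow> 'a \<Rightarrow> 'a::semilattice_inf" where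
  "bar F G = inf (F G) G"

text \<open>Ordinals are represented by elements of an arbitrary well-ordered type 'o
  (every ordinal is the order type of an initial segment of some well-ordered type).
  iter F H alpha is F^alpha starting from F^0 = H, with F^(beta+1) = F(F^beta)
  and F^lambda = Inter of F^beta, beta < lambda, at limits.\<close>

definition is_pred :: "'o::wellorder \<Rightarrow> 'o \<Rightarrow> bool" where
  "is_pred b a \<longleftrightarrow> b < a \<and> \<not> (\<exists>c. b < c \<and> c < a)"

definition iter :: "('a \<Rightarrow> 'a) \<Rightarrow> 'a::complete_lattice \<Rightarrow> 'o::wellorder \<Rightarrow> 'a" where
  "iter F H = wfrec {(b, a). b < a}
     (\<lambda>r a. if (\<exists>b. is_pred b a) then F (r (THE b. is_pred b a))
            else if (\<exists>b. b < a) then Inf (r ` {b. b < a})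
            else H)"

text \<open>F^(alpha+1) = F(F^alpha), so alpha is a closure point iff F(F^alpha) = F^alpha.
  X is the outcome of F (within the ordinals of type 'o) iff the closure ordinal exists
  and F^(closure ordinal) = X.\<close>
definition has_outcome :: "'o::wellorder itself \<Rightarrow> ('a \<Rightarrow> 'a) \<Rightarrow> 'a::complete_lattice \<Rightarrow> 'a \<Rightarrow> bool" where
  "has_outcome (_ :: 'o itself) F H X \<longleftrightarrow>
     (\<exists>a::'o. F (iter F H a) = iter F H a \<and>
              (\<forall>b<a. F (iter F H b) \<noteq> iter F H b) \<and> X = iter F H a)"

definition relaxation :: "'o::wellorder itself \<Rightarrow> ('a \<Rightarrow> 'a) \<Rightarrow> ('a \<Rightarrow> 'a) \<Rightarrow> 'a::complete_lattice \<Rightarrow> bool" where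
  "relaxation (_ :: 'o itself) F R H \<longleftrightarrow>
     (\<forall>a::'o. let X = iter R H a in
        F X \<le> R X \<and>
        (F X \<le> X \<longrightarrow> R X \<le> X) \<and>
        (R X = X \<longrightarrow> F X = X))"

definition order_independent :: "'o::wellorder itself \<Rightarrow> ('i \<Rightarrow> 's set) \<Rightarrow>
     (('i \<Rightarrow> 's set) \<Rightarrow> ('i \<Rightarrow> 's set)) \<Rightarrow> bool" where
  "order_independent Ot T F \<longleftrightarrow>
     (\<forall>X Y. (\<exists>R. operator_on T R \<and> relaxation Ot F R T \<and> has_outcome Ot R T X) \<and>
            (\<exists>R. operator_on T R \<and> relaxation Ot F R T \<and> has_outcome Ot R T Y) \<longrightarrow> X = Y)"

end

theory Submission
  imports Defs
begin

text \<open>Call a restriction Z closed if GR(Z) \<subseteq> Z.  On a closed Z the local and the global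
  best responses coincide, LR(Z) = GR(Z): a best response to \<mu> within Z is a best response
  within T, because by property B some global best response to \<mu> exists and it lies in
  GR(Z) \<subseteq> Z.  Property A makes GR monotone, so closedness is preserved by GR, by
  intersections and by every relaxation step of the bar-LR operator; hence all iterations in
  question consist of closed restrictions, on which bar-GR, bar-LR and LR agree.  For a
  relaxation R with outcome X, X is a fixpoint of GR, and by monotonicity every fixpoint of GR
  lies below all iterates of bar-GR and of R; comparing the two iterations squeezes the
  outcome of bar-GR to X.\<close>

lemma is_pred_The:
  assumes "is_pred (b::'o::wellorder) a"
  shows "(THE b. is_pred b a) = b"
  using assms by (intro the_equality) (auto simp: is_pred_def dest: linorder_neqE)

lemma iter_unfold:
  fixes a :: "'o::wellorder"
  shows "iter F H a = (if \<exists>b. is_pred b a then F (iter F H (THE b. is_pred b a))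
            else if \<exists>b. b < a then Inf (iter F H ` {b. b < a}) else H)"
proof -
  have "iter F H a = (\<lambda>r a. if \<exists>b. is_pred b a then F (r (THE b. is_pred b a))
            else if \<exists>b. b < a then Inf (r ` {b. b < a}) else H)
          (cut (iter F H) {(b, a). b < a} a) a"
    unfolding iter_def by (rule wfrec[OF wf])
  also have "\<dots> = (if \<exists>b. is_pred b a then F (iter F H (THE b. is_pred b a))
            else if \<exists>b. b < a then Inf (iter F H ` {b. b < a}) else H)"
  proof (cases "\<exists>b. is_pred b a")
    case True
    then obtain b where "is_pred b a" by blast
    moreover from this have "b < a" by (simp add: is_pred_def)
    ultimately show ?thesis by (simp add: is_pred_The cut_apply)
  next
    case False
    have "cut (iter F H) {(b, a). b < a} a ` {b. b < a} = iter F H ` {b. b < a}"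
      by (auto simp: cut_apply image_iff)
    with False show ?thesis by simp
  qed
  finally show ?thesis .
qed

lemma iter_succ:
  fixes a :: "'o::wellorder"
  shows "is_pred b a \<Longrightarrow> iter F H a = F (iter F H b)"
  by (subst iter_unfold) (auto simp: is_pred_The)

lemma iter_limit:
  fixes a :: "'o::wellorder"
  shows "\<nexists>c. is_pred c a \<Longrightarrow> b < a \<Longrightarrow> iter F H a = Inf (iter F H ` {c. c < a})"
  by (subst iter_unfold) auto

lemma iter_bottom:
  fixes a :: "'o::wellorder"
  shows "\<nexists>b. b < a \<Longrightarrow> iter F H a = H"
  by (subst iter_unfold) (auto simp: is_pred_def)

lemma iter_induct2:
  fixes a :: "'o::wellorder"
  assumes start: "P H H"
    and step: "\<And>b::'o. P (iter F H b) (iter G H b) \<Longrightarrow> P (F (iter F H b)) (G (iter G H b))"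
    and limit: "\<And>A::'o set. A \<noteq> {} \<Longrightarrow> \<forall>c\<in>A. P (iter F H c) (iter G H c) \<Longrightarrow>
                  P (Inf (iter F H ` A)) (Inf (iter G H ` A))"
  shows "P (iter F H a) (iter G H a)"
proof (induction a rule: less_induct)
  case (less a)
  consider (succ) b where "is_pred b a"
    | (lim) b where "\<nexists>c. is_pred c a" "b < a"
    | (bottom) "\<nexists>b. b < a"
    by blast
  then show ?case
  proof cases
    case succ
    then have "b < a" by (simp add: is_pred_def)
    then show ?thesis unfolding iter_succ[OF succ] by (rule step[OF less])
  next
    case lim
    show ?thesis unfolding iter_limit[OF lim] by (rule limit) (use lim(2) less in auto)
  next
    case bottom
    show ?thesis unfolding iter_bottom[OF bottom] by (rule start)
  qed
qed

lemma iter_induct: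
  fixes a :: "'o::wellorder"
  assumes start: "P H"
    and step: "\<And>b::'o. P (iter F H b) \<Longrightarrow> P (F (iter F H b))"
    and Inf: "\<And>S. S \<noteq> {} \<Longrightarrow> \<forall>x\<in>S. P x \<Longrightarrow> P (Inf S)"
  shows "P (iter F H a)"
proof (rule iter_induct2[where P = "\<lambda>x _. P x" and G = F])
  fix A :: "'o set"
  assume "A \<noteq> {}" "\<forall>c\<in>A. P (iter F H c)"
  then show "P (Inf (iter F H ` A))" by (intro Inf) auto
qed (fact start, fact step)

lemma iter_mono:
  fixes a :: "'o::wellorder"
  assumes "\<And>b::'o. iter F H b \<le> iter G H b \<Longrightarrow> F (iter F H b) \<le> G (iter G H b)"
  shows "iter F H a \<le> iter G H a"
proof (rule iter_induct2[where P = "(\<le>)"])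
  fix A :: "'o set"
  assume "\<forall>c\<in>A. iter F H c \<le> iter G H c"
  then show "Inf (iter F H ` A) \<le> Inf (iter G H ` A)" by (intro INF_superset_mono) auto
qed (simp, fact assms)

lemma iter_cong:
  fixes a :: "'o::wellorder"
  assumes "\<And>b::'o. F (iter F H b) = G (iter F H b)"
  shows "iter F H a = iter G H a"
proof (rule iter_induct2[where P = "(=)"])
  fix b :: 'o
  assume "iter F H b = iter G H b"
  then show "F (iter F H b) = G (iter G H b)" using assms[of b] by simp
next
  fix A :: "'o set"
  assume "\<forall>c\<in>A. iter F H c = iter G H c"
  then show "Inf (iter F H ` A) = Inf (iter G H ` A)" by (intro INF_cong) auto
qed simp

lemma le_iter:
  fixes a :: "'o::wellorder"
  assumes start: "Y \<le> H" and step: "\<And>b::'o. Y \<le> iter F H b \<Longrightarrow> Y \<le> F (iter F H b)"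
  shows "Y \<le> iter F H a"
proof (rule iter_induct[where P = "\<lambda>x. Y \<le> x"])
  show "Y \<le> Inf S" if "\<forall>x\<in>S. Y \<le> x" for S :: "'a set"
    using that by (intro Inf_greatest) auto
qed (fact start, fact step)

lemma has_outcome_unique:
  "has_outcome Ot F H X \<Longrightarrow> has_outcome Ot F H Y \<Longrightarrow> X = Y"
  unfolding has_outcome_def by (metis linorder_neqE)

lemma has_outcome_fixpoint: "has_outcome Ot F H X \<Longrightarrow> F X = X"
  unfolding has_outcome_def by auto

lemma has_outcome_LeastI:
  fixes a :: "'o::wellorder"
  assumes "F (iter F H a) = iter F H a"
  shows "has_outcome TYPE('o) F H (iter F H (LEAST c::'o. F (iter F H c) = iter F H c))"
  unfolding has_outcome_def
proof (intro exI conjI)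
  let ?fixed = "\<lambda>c::'o. F (iter F H c) = iter F H c"
  show "?fixed (LEAST c. ?fixed c)" using assms by (rule LeastI)
  show "\<forall>b < (LEAST c. ?fixed c). \<not> ?fixed b" using not_less_Least by blast
qed (rule refl)

lemma has_outcome_cong:
  assumes "\<And>b::'o::wellorder. F (iter F H b) = G (iter F H b)"
  shows "has_outcome TYPE('o) F H X \<longleftrightarrow> has_outcome TYPE('o) G H X"
proof -
  have iter_eq: "iter G H b = iter F H b" for b :: 'o
    using assms by (rule iter_cong[symmetric])
  have "G (iter G H b) = F (iter F H b)" for b :: 'o
    by (simp add: iter_eq assms)
  then show ?thesis unfolding has_outcome_def by (simp add: iter_eq)
qed

lemma restriction_Inf:
  "S \<noteq> {} \<Longrightarrow> \<forall>G\<in>S. restriction T G \<Longrightarrow> restriction T (Inf S)"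
  unfolding restriction_def by auto

lemma restriction_iff_le: "restriction T G \<longleftrightarrow> G \<le> T"
  unfolding restriction_def le_fun_def by simp

lemma restriction_GR: "restriction T (GR T ep bcap G)"
  unfolding restriction_def GR_def by auto

lemma GR_mono:
  assumes "propA T bcap" "restriction T G1" "restriction T G2" "G1 \<le> G2"
  shows "GR T ep bcap G1 \<le> GR T ep bcap G2"
  using assms unfolding propA_def GR_def le_fun_def by blast

locale belief_game =
  fixes T :: "'i \<Rightarrow> 's set"
    and B :: "'i \<Rightarrow> 'b set"
    and ep :: "'i \<Rightarrow> 's \<Rightarrow> 'b \<Rightarrow> real"
    and bcap :: "'i \<Rightarrow> ('i \<Rightarrow> 's set) \<Rightarrow> 'b set"
  assumes belief_structure: "belief_structure T B bcap"
    and property_A: "propA T bcap"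
    and property_B: "propB T B ep"
begin

abbreviation "gr \<equiv> GR T ep bcap"
abbreviation "lr \<equiv> LR T ep bcap"

definition GR_closed :: "('i \<Rightarrow> 's set) \<Rightarrow> bool" where
  "GR_closed Z \<longleftrightarrow> restriction T Z \<and> gr Z \<le> Z"

lemma LR_eq_GR_if_GR_closed:
  assumes "GR_closed Z"
  shows "lr Z = gr Z"
proof (intro ext equalityI subsetI)
  fix i s
  have Z: "restriction T Z" and GR_le: "gr Z \<le> Z" using assms unfolding GR_closed_def by auto
  show "s \<in> lr Z i" if "s \<in> gr Z i"
    using that Z unfolding GR_def LR_def BR_def restriction_def by blast
  assume "s \<in> lr Z i"
  then obtain mu where s: "s \<in> T i" and mu: "mu \<in> bcap i Z"
    and s_best: "\<forall>s'\<in>Z i. ep i s' mu \<le> ep i s mu"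
    unfolding LR_def BR_def by auto
  have "mu \<in> B i" using belief_structure Z mu unfolding belief_structure_def by blast
  then obtain t where t: "t \<in> BR T ep i T mu" using property_B unfolding propB_def by blast
  with mu have "t \<in> gr Z i" unfolding GR_def BR_def by auto
  with GR_le have "t \<in> Z i" unfolding le_fun_def by blast
  with t s_best s have "s \<in> BR T ep i T mu" unfolding BR_def by force
  with s mu show "s \<in> gr Z i" unfolding GR_def by auto
qed

lemma bar_GR_if_GR_closed: "GR_closed Z \<Longrightarrow> bar gr Z = gr Z"
  unfolding GR_closed_def bar_def by (simp add: inf_absorb1)

lemma bar_LR_if_GR_closed: "GR_closed Z \<Longrightarrow> bar lr Z = gr Z"
  using LR_eq_GR_if_GR_closed bar_GR_if_GR_closed unfolding bar_def by simp

lemma GR_closed_top: "GR_closed T"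
  unfolding GR_closed_def restriction_def GR_def le_fun_def by auto

lemma GR_closed_GR: "GR_closed Z \<Longrightarrow> GR_closed (gr Z)"
  using GR_mono[OF property_A restriction_GR] restriction_GR unfolding GR_closed_def by blast

lemma GR_closed_Inf:
  assumes "S \<noteq> {}" "\<forall>Z\<in>S. GR_closed Z"
  shows "GR_closed (Inf S)"
proof -
  have restr: "restriction T (Inf S)" using assms restriction_Inf unfolding GR_closed_def by blast
  have "gr (Inf S) \<le> Z" if "Z \<in> S" for Z
  proof -
    have "gr (Inf S) \<le> gr Z"
      using GR_mono[OF property_A restr] that assms(2) Inf_lower unfolding GR_closed_def by blast
    also have "\<dots> \<le> Z" using that assms(2) unfolding GR_closed_def by blast
    finally show ?thesis .
  qed
  with restr show ?thesis unfolding GR_closed_def by (simp add: Inf_greatest)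
qed

lemma GR_closed_iter_bar_GR: "GR_closed (iter (bar gr) T (a::'o::wellorder))"
  by (rule iter_induct[where P = GR_closed])
    (use GR_closed_top GR_closed_GR GR_closed_Inf bar_GR_if_GR_closed in auto)

lemma le_GR_if_GR_fixpoint:
  assumes "gr Y = Y" "Y \<le> Z" "GR_closed Z"
  shows "Y \<le> gr Z"
proof -
  have "restriction T Y" using restriction_GR[of T ep bcap Y] assms(1) by simp
  with assms(2,3) have "gr Y \<le> gr Z"
    using GR_mono[OF property_A] unfolding GR_closed_def by blast
  with assms(1) show ?thesis by simp
qed

lemma GR_fixpoint_le_top: "gr Y = Y \<Longrightarrow> Y \<le> T"
  using restriction_GR[of T ep bcap Y] by (simp add: restriction_iff_le)

lemma GR_fixpoint_le_iter_bar_GR: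
  assumes "gr Y = Y"
  shows "Y \<le> iter (bar gr) T (a::'o::wellorder)"
proof (rule le_iter)
  show "Y \<le> T" using GR_fixpoint_le_top[OF assms] .
  fix b :: 'o
  assume "Y \<le> iter (bar gr) T b"
  then show "Y \<le> bar gr (iter (bar gr) T b)"
    unfolding bar_GR_if_GR_closed[OF GR_closed_iter_bar_GR]
    by (rule le_GR_if_GR_fixpoint[OF assms _ GR_closed_iter_bar_GR])
qed

context
  fixes R :: "('i \<Rightarrow> 's set) \<Rightarrow> ('i \<Rightarrow> 's set)"
  assumes operator: "operator_on T R"
    and relax: "relaxation TYPE('o::wellorder) (bar lr) R T"
begin

lemma relaxation_at_iter:
  fixes a :: 'o
  defines "Z \<equiv> iter R T a"
  shows "bar lr Z \<le> R Z" "bar lr Z \<le> Z \<Longrightarrow> R Z \<le> Z" "R Z = Z \<Longrightarrow> bar lr Z = Z"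
  using relax unfolding relaxation_def Let_def Z_def by blast+

lemma GR_closed_iter_relaxation: "GR_closed (iter R T (a::'o))"
proof (rule iter_induct[where P = GR_closed])
  fix b :: 'o
  let ?Z = "iter R T b"
  assume Z_closed: "GR_closed ?Z"
  then have bar_LR: "bar lr ?Z = gr ?Z" by (rule bar_LR_if_GR_closed)
  have GR_le_R: "gr ?Z \<le> R ?Z" using relaxation_at_iter(1)[of b] by (simp only: bar_LR)
  have R_le: "R ?Z \<le> ?Z"
    using relaxation_at_iter(2)[of b] Z_closed unfolding bar_LR GR_closed_def by blast
  have restr: "restriction T (R ?Z)"
    using operator Z_closed unfolding operator_on_def GR_closed_def by blast
  with R_le Z_closed have "gr (R ?Z) \<le> gr ?Z"
    using GR_mono[OF property_A] unfolding GR_closed_def by blast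
  with GR_le_R restr show "GR_closed (R ?Z)" unfolding GR_closed_def by simp
qed (use GR_closed_top GR_closed_Inf in auto)

lemma GR_le_relaxation: "gr (iter R T a) \<le> R (iter R T a)" for a :: 'o
  using relaxation_at_iter(1)[of a]
  by (simp only: bar_LR_if_GR_closed[OF GR_closed_iter_relaxation])

lemma iter_bar_GR_le_iter_relaxation: "iter (bar gr) T a \<le> iter R T a" for a :: 'o
proof (rule iter_mono)
  fix b :: 'o
  assume "iter (bar gr) T b \<le> iter R T b"
  then have "gr (iter (bar gr) T b) \<le> gr (iter R T b)"
    using GR_mono[OF property_A] GR_closed_iter_bar_GR GR_closed_iter_relaxation
    unfolding GR_closed_def by blast
  also have "\<dots> \<le> R (iter R T b)" by (rule GR_le_relaxation)
  finally show "bar gr (iter (bar gr) T b) \<le> R (iter R T b)"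
    by (simp only: bar_GR_if_GR_closed[OF GR_closed_iter_bar_GR])
qed

lemma GR_fixpoint_le_iter_relaxation:
  assumes "gr Y = Y"
  shows "Y \<le> iter R T (a::'o)"
proof (rule le_iter)
  show "Y \<le> T" using GR_fixpoint_le_top[OF assms] .
  fix b :: 'o
  assume "Y \<le> iter R T b"
  then have "Y \<le> gr (iter R T b)"
    by (rule le_GR_if_GR_fixpoint[OF assms _ GR_closed_iter_relaxation])
  also have "\<dots> \<le> R (iter R T b)" by (rule GR_le_relaxation)
  finally show "Y \<le> R (iter R T b)" .
qed

lemma GR_fixpoint_if_outcome_relaxation:
  assumes "has_outcome TYPE('o) R T X"
  obtains a :: 'o where "X = iter R T a" "gr X = X"
proof -
  obtain a :: 'o where R_fixed: "R (iter R T a) = iter R T a" and X: "X = iter R T a"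
    using assms unfolding has_outcome_def by blast
  have "gr X = X"
    using relaxation_at_iter(3)[OF R_fixed]
    unfolding X bar_LR_if_GR_closed[OF GR_closed_iter_relaxation] .
  with X show thesis by (rule that)
qed

lemma has_outcome_relaxation:
  assumes "has_outcome TYPE('o) R T X"
  shows "has_outcome TYPE('o) (bar gr) T X"
proof -
  obtain a :: 'o where Xa: "X = iter R T a" and GR_X: "gr X = X"
    using GR_fixpoint_if_outcome_relaxation[OF assms] .
  have "iter (bar gr) T a = X"
    using iter_bar_GR_le_iter_relaxation[of a] GR_fixpoint_le_iter_bar_GR[OF GR_X, of a]
    unfolding Xa by (rule antisym)
  with GR_X have "bar gr (iter (bar gr) T a) = iter (bar gr) T a" by (simp add: bar_def)
  then obtain Y where outcome: "has_outcome TYPE('o) (bar gr) T Y"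
    and Y: "Y = iter (bar gr) T (LEAST c::'o. bar gr (iter (bar gr) T c) = iter (bar gr) T c)"
    using has_outcome_LeastI by blast
  have "gr Y = Y"
    using has_outcome_fixpoint[OF outcome]
    unfolding Y bar_GR_if_GR_closed[OF GR_closed_iter_bar_GR] .
  then have "Y \<le> X" using GR_fixpoint_le_iter_relaxation Xa by blast
  moreover have "X \<le> Y" using GR_fixpoint_le_iter_bar_GR[OF GR_X] Y by blast
  ultimately show ?thesis using outcome by simp
qed

end

end

theorem mainTheorem7:
  fixes T :: "'i::finite \<Rightarrow> 's set"
    and B :: "'i \<Rightarrow> 'b set"
    and ep :: "'i \<Rightarrow> 's \<Rightarrow> 'b \<Rightarrow> real"
    and bcap :: "'i \<Rightarrow> ('i \<Rightarrow> 's set) \<Rightarrow> 'b set"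
  assumes game: "\<forall>i. T i \<noteq> {}"
    and bs: "belief_structure T B bcap"
    and A: "propA T bcap"
    and PB: "propB T B ep"
  shows
    "(\<forall>a::'o::wellorder. iter (bar (GR T ep bcap)) T a = iter (bar (LR T ep bcap)) T a) \<and>
     (\<forall>X. has_outcome TYPE('o) (bar (GR T ep bcap)) T X \<longleftrightarrow>
          has_outcome TYPE('o) (bar (LR T ep bcap)) T X) \<and>
     order_independent TYPE('o) T (bar (LR T ep bcap)) \<and>
     (\<forall>R X. operator_on T R \<and> relaxation TYPE('o) (bar (LR T ep bcap)) R T \<and>
            has_outcome TYPE('o) R T X \<longrightarrow>
            has_outcome TYPE('o) (bar (GR T ep bcap)) T X) \<and>
     (\<forall>a::'o. iter (LR T ep bcap) T a = iter (bar (LR T ep bcap)) T a) \<and>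
     (\<forall>X. has_outcome TYPE('o) (LR T ep bcap) T X \<longleftrightarrow>
          has_outcome TYPE('o) (bar (LR T ep bcap)) T X)"
proof -
  interpret belief_game T B ep bcap using bs A PB by unfold_locales
  have bar_GR_bar_LR: "bar gr (iter (bar gr) T b) = bar lr (iter (bar gr) T b)" for b :: 'o
    using GR_closed_iter_bar_GR[of b] by (simp only: bar_GR_if_GR_closed bar_LR_if_GR_closed)
  have iter_eq: "iter (bar gr) T a = iter (bar lr) T a" for a :: 'o
    using bar_GR_bar_LR by (rule iter_cong)
  have iter_closed: "GR_closed (iter (bar lr) T b)" for b :: 'o
    using GR_closed_iter_bar_GR[of b] by (simp only: iter_eq)
  have bar_LR_LR: "bar lr (iter (bar lr) T b) = lr (iter (bar lr) T b)" for b :: 'o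
    by (simp only: bar_LR_if_GR_closed[OF iter_closed] LR_eq_GR_if_GR_closed[OF iter_closed])
  have relaxations: "operator_on T R \<and> relaxation TYPE('o) (bar lr) R T \<and>
      has_outcome TYPE('o) R T X \<longrightarrow> has_outcome TYPE('o) (bar gr) T X" for R X
    using has_outcome_relaxation by blast
  then have "order_independent TYPE('o) T (bar lr)"
    unfolding order_independent_def using has_outcome_unique by blast
  with relaxations show ?thesis
    using iter_eq iter_cong[of "bar lr" T lr, OF bar_LR_LR]
      has_outcome_cong[of "bar gr" T "bar lr", OF bar_GR_bar_LR]
      has_outcome_cong[of "bar lr" T lr, OF bar_LR_LR] by simp
qed

end
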